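(* Fix an integer $m\geq 2$. Let $\Gamma$ be a distance-regular graph with smallest eigenvalue at least $-m$, valency $k\ge 2$, diameter $D\ge 2$ and intersection number $a_1$. Then $k< m(a_1+m)$.
   Context: A finite connected graph $\Gamma$ with diameter $D$ is distance-regular if there are integers $b_i,c_i$ ($0\le i\le D$) such that for any vertices $x,y$ with $d(x,y)=i$, exactly $c_i$ neighbours of $y$ are at distance $i-1$ from $x$ and exactly $b_i$ neighbours of $y$ are at distance $i+1$ from $x$; its valency is $k=b_0$ and $a_i:=k-b_i-c_i$ (so $a_1$ is the number of common neighbours of two adjacent vertices). The smallest eigenvalue is that of the adjacency matrix. *)

theory Defs
  imports Complex_Main
begin

definition simple_graph :: "'a set \<Rightarrow> ('a \<Rightarrow> 'a \<Rightarrow> bool) \<Rightarrow> bool" where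
  "simple_graph V E \<longleftrightarrow> finite V \<and> V \<noteq> {} \<and>
     (\<forall>x y. E x y \<longrightarrow> x \<in> V \<and> y \<in> V) \<and>
     (\<forall>x y. E x y \<longrightarrow> E y x) \<and> (\<forall>x. \<not> E x x)"

fun walk :: "('a \<Rightarrow> 'a \<Rightarrow> bool) \<Rightarrow> nat \<Rightarrow> 'a \<Rightarrow> 'a \<Rightarrow> bool" where
  "walk E 0 x y = (x = y)"
| "walk E (Suc n) x y = (\<exists>z. E x z \<and> walk E n z y)"

definition connected_graph :: "'a set \<Rightarrow> ('a \<Rightarrow> 'a \<Rightarrow> bool) \<Rightarrow> bool" where
  "connected_graph V E \<longleftrightarrow> simple_graph V E \<and> (\<forall>x\<in>V. \<forall>y\<in>V. \<exists>n. walk E n x y)"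

definition gdist :: "('a \<Rightarrow> 'a \<Rightarrow> bool) \<Rightarrow> 'a \<Rightarrow> 'a \<Rightarrow> nat" where
  "gdist E x y = (LEAST n. walk E n x y)"

definition diameter :: "'a set \<Rightarrow> ('a \<Rightarrow> 'a \<Rightarrow> bool) \<Rightarrow> nat" where
  "diameter V E = Max {gdist E x y | x y. x \<in> V \<and> y \<in> V}"

text \<open>Distance-regular with intersection numbers b i, c i (for all i; for d(x,y)=0 the
  c-condition forces c 0 = 0, as in the usual convention).\<close>
definition distance_regular ::
  "'a set \<Rightarrow> ('a \<Rightarrow> 'a \<Rightarrow> bool) \<Rightarrow> (nat \<Rightarrow> nat) \<Rightarrow> (nat \<Rightarrow> nat) \<Rightarrow> bool" where
  "distance_regular V E b c \<longleftrightarrow> connected_graph V E \<and>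
     (\<forall>x\<in>V. \<forall>y\<in>V.
        card {z. E y z \<and> gdist E x z + 1 = gdist E x y} = c (gdist E x y) \<and>
        card {z. E y z \<and> gdist E x z = gdist E x y + 1} = b (gdist E x y))"

text \<open>Eigenvalue of the adjacency matrix (A f)(x) = sum of f over neighbours of x.\<close>
definition adj_eigenvalue :: "'a set \<Rightarrow> ('a \<Rightarrow> 'a \<Rightarrow> bool) \<Rightarrow> real \<Rightarrow> bool" where
  "adj_eigenvalue V E \<theta> \<longleftrightarrow> (\<exists>f :: 'a \<Rightarrow> real.
      (\<exists>x\<in>V. f x \<noteq> 0) \<and>
      (\<forall>x\<in>V. (\<Sum>y\<in>{y\<in>V. E x y}. f y) = \<theta> * f x))"

end

(*
  By the Rayleigh principle (a minimiser of the adjacency form on the unit sphere is an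
  eigenvector), smallest eigenvalue at least -m means f\<^sup>T A f \<ge> -m |f|\<^sup>2 for every real f.
  Since D \<ge> 2 there is an induced path x ~ p ~ q. Test with
  f = -(k/m) e\<^sub>x + 1\<^sub>N\<^sub>(\<^sub>x\<^sub>) - (d/m) e\<^sub>q, where d \<ge> 1 counts the neighbours of q in N(x):
  as every vertex of N(x) has at most a\<^sub>1 neighbours in N(x), the inequality becomes
  k (m (a\<^sub>1 + m) - k) \<ge> d\<^sup>2 > 0.
*)

theory Submission
  imports Defs "HOL-Analysis.Function_Topology"
begin

definition adj_op :: "'a set \<Rightarrow> ('a \<Rightarrow> 'a \<Rightarrow> bool) \<Rightarrow> ('a \<Rightarrow> real) \<Rightarrow> 'a \<Rightarrow> real" where
  "adj_op V E f x = (\<Sum>y\<in>{y\<in>V. E x y}. f y)"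

definition adj_form :: "'a set \<Rightarrow> ('a \<Rightarrow> 'a \<Rightarrow> bool) \<Rightarrow> ('a \<Rightarrow> real) \<Rightarrow> ('a \<Rightarrow> real) \<Rightarrow> real" where
  "adj_form V E f g = (\<Sum>x\<in>V. f x * adj_op V E g x)"

definition sq_norm :: "'a set \<Rightarrow> ('a \<Rightarrow> real) \<Rightarrow> real" where
  "sq_norm V f = (\<Sum>x\<in>V. (f x)\<^sup>2)"

lemma simple_graph_symp: "simple_graph V E \<Longrightarrow> symp E"
  unfolding simple_graph_def by (blast intro: sympI)

lemma adj_op_linear: "adj_op V E (\<lambda>y. a * f y + b * g y) x = a * adj_op V E f x + b * adj_op V E g x"
  unfolding adj_op_def by (simp add: sum.distrib sum_distrib_left)

lemma adj_form_double_sum: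
  assumes "finite V"
  shows "adj_form V E f g = (\<Sum>x\<in>V. \<Sum>y\<in>V. if E x y then f x * g y else 0)"
  unfolding adj_form_def adj_op_def
  by (simp add: sum_distrib_left sum.inter_filter[OF assms] if_distrib cong: if_cong)

lemma adj_form_sym:
  assumes "finite V" "symp E"
  shows "adj_form V E f g = adj_form V E g f"
proof -
  have "adj_form V E f g = (\<Sum>y\<in>V. \<Sum>x\<in>V. if E x y then f x * g y else 0)"
    unfolding adj_form_double_sum[OF assms(1)] by (rule sum.swap)
  also have "\<dots> = (\<Sum>y\<in>V. \<Sum>x\<in>V. if E y x then g y * f x else 0)"
    using assms(2) by (intro sum.cong refl) (auto simp: mult.commute dest: sympD)
  finally show ?thesis by (simp add: adj_form_double_sum[OF assms(1)])
qed

lemma adj_form_add_scaled: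
  assumes "finite V" "symp E"
  shows "adj_form V E (\<lambda>y. f y + e * g y) (\<lambda>y. f y + e * g y)
     = adj_form V E f f + 2 * e * adj_form V E f g + e\<^sup>2 * adj_form V E g g"
proof -
  have "adj_op V E (\<lambda>y. f y + e * g y) x = adj_op V E f x + e * adj_op V E g x" for x
    using adj_op_linear[of V E 1 f e g x] by simp
  then have "adj_form V E (\<lambda>y. f y + e * g y) (\<lambda>y. f y + e * g y)
      = adj_form V E f f + e * adj_form V E f g + e * adj_form V E g f + e\<^sup>2 * adj_form V E g g"
    unfolding adj_form_def
    by (simp add: algebra_simps sum.distrib sum_distrib_left power2_eq_square)
  then show ?thesis using adj_form_sym[OF assms, where f=g and g=f] by simp
qed

lemma sq_norm_add_scaled:
  "sq_norm V (\<lambda>y. f y + e * g y) = sq_norm V f + 2 * e * (\<Sum>x\<in>V. f x * g x) + e\<^sup>2 * sq_norm V g"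
  unfolding sq_norm_def by (simp add: algebra_simps sum.distrib sum_distrib_left power2_eq_square)

lemma adj_form_scale: "adj_form V E (\<lambda>y. c * f y) (\<lambda>y. c * f y) = c\<^sup>2 * adj_form V E f f"
  unfolding adj_form_def adj_op_def
  by (simp add: sum_distrib_left algebra_simps power2_eq_square)

lemma sq_norm_scale: "sq_norm V (\<lambda>y. c * f y) = c\<^sup>2 * sq_norm V f"
  unfolding sq_norm_def by (simp add: sum_distrib_left algebra_simps power2_eq_square)

lemma sq_norm_nonneg: "sq_norm V f \<ge> 0"
  unfolding sq_norm_def by (simp add: sum_nonneg)

lemma sq_norm_eq_0_iff:
  assumes "finite V"
  shows "sq_norm V f = 0 \<longleftrightarrow> (\<forall>x\<in>V. f x = 0)"
  using assms unfolding sq_norm_def by (simp add: sum_nonneg_eq_0_iff)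

lemma adj_form_restrict:
  "adj_form V E (\<lambda>x. if x \<in> V then h x else 0) (\<lambda>x. if x \<in> V then h x else 0) = adj_form V E h h"
  unfolding adj_form_def adj_op_def by (intro sum.cong refl) auto

lemma sq_norm_restrict: "sq_norm V (\<lambda>x. if x \<in> V then h x else 0) = sq_norm V h"
  unfolding sq_norm_def by (intro sum.cong refl) auto

lemma compact_unit_sphere_supported_on:
  assumes "finite V"
  shows "compact {f::'a \<Rightarrow> real. (\<forall>x. x \<notin> V \<longrightarrow> f x = 0) \<and> sq_norm V f = 1}" (is "compact ?K")
proof -
  define S where "S = (\<lambda>x::'a. if x \<in> V then {-1..1::real} else {0})"
  have "compactin (product_topology (\<lambda>_. euclideanreal) UNIV) (PiE UNIV S)"
    by (subst compactin_PiE) (auto simp: S_def)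
  then have "compact (PiE UNIV S)" by (simp add: euclidean_product_topology)
  moreover have "closed ?K"
    unfolding sq_norm_def
    by (intro closed_Collect_conj closed_Collect_all closed_Collect_imp closed_Collect_eq
        continuous_intros) auto
  moreover have "?K \<subseteq> PiE UNIV S"
  proof (auto simp: S_def)
    fix f :: "'a \<Rightarrow> real" and x assume f: "sq_norm V f = 1" "x \<in> V"
    have "(f x)\<^sup>2 \<le> sq_norm V f"
      unfolding sq_norm_def using f(2) assms by (intro member_le_sum) auto
    then have "\<bar>f x\<bar> \<le> 1" using f(1) by (simp add: abs_square_le_1)
    then show "-1 \<le> f x" "f x \<le> 1" by auto
  qed
  ultimately show ?thesis using compact_Int_closed[of "PiE UNIV S" ?K] by (simp add: Int_absorb1)
qed

lemma linear_coeff_zero_if_quadratic_nonneg: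
  fixes r s :: real
  assumes nonneg: "\<And>e. 0 \<le> 2 * e * r + e\<^sup>2 * s" and "r \<ge> 0"
  shows "r = 0"
proof (rule ccontr)
  assume "r \<noteq> 0"
  then have r: "r > 0" using \<open>r \<ge> 0\<close> by simp
  define d where "d = \<bar>s\<bar> + 1"
  have d: "d > 0" unfolding d_def by simp
  have "2 * (-r/d) * r + (-r/d)\<^sup>2 * s \<le> 2 * (-r/d) * r + (-r/d)\<^sup>2 * \<bar>s\<bar>"
    by (intro add_left_mono mult_left_mono) auto
  also have "\<dots> = r\<^sup>2 * (\<bar>s\<bar> - 2 * d) / d\<^sup>2"
    using d by (simp add: field_simps power2_eq_square)
  also have "\<dots> < 0"
    using r d by (intro divide_neg_pos mult_pos_neg) (auto simp: d_def)
  finally show False using nonneg[of "-r/d"] by linarith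
qed

lemma adj_form_min_eigenvector:
  assumes "finite V" "symp E"
    and lower: "\<And>h. lam * sq_norm V h \<le> adj_form V E h h"
    and attained: "adj_form V E f f = lam * sq_norm V f"
    and nonzero: "\<exists>x\<in>V. f x \<noteq> 0"
  shows "adj_eigenvalue V E lam"
proof -
  define g where "g x = adj_op V E f x - lam * f x" for x
  have "adj_form V E g f - lam * (\<Sum>x\<in>V. f x * g x) = sq_norm V g"
    unfolding adj_form_def sq_norm_def g_def
    by (simp add: sum_distrib_left sum_subtractf sum.distrib algebra_simps power2_eq_square)
  then have cross: "adj_form V E f g - lam * (\<Sum>x\<in>V. f x * g x) = sq_norm V g"
    using adj_form_sym[OF assms(1,2), where f=f and g=g] by linarith
  \<comment> \<open>\<open>f + e g\<close> cannot beat the minimiser \<open>f\<close>, and the term linear in \<open>e\<close> is \<open>2 e |g|\<^sup>2\<close>\<close>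
  have "0 \<le> 2 * e * sq_norm V g + e\<^sup>2 * (adj_form V E g g - lam * sq_norm V g)" for e
    using lower[of "\<lambda>y. f y + e * g y"] attained
    unfolding adj_form_add_scaled[OF assms(1,2)] sq_norm_add_scaled cross[symmetric]
    by (simp add: algebra_simps)
  then have "sq_norm V g = 0"
    using linear_coeff_zero_if_quadratic_nonneg sq_norm_nonneg by blast
  then have "\<forall>x\<in>V. adj_op V E f x = lam * f x"
    using sq_norm_eq_0_iff[OF assms(1)] unfolding g_def by simp
  then show ?thesis
    using nonzero unfolding adj_eigenvalue_def adj_op_def by blast
qed

lemma adj_form_attains_min_on_sphere:
  assumes "simple_graph V E"
  obtains f where "sq_norm V f = 1" and "\<And>h. adj_form V E f f * sq_norm V h \<le> adj_form V E h h"
proof -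
  have fin: "finite V" and ne: "V \<noteq> {}"
    using assms unfolding simple_graph_def by auto
  define K where "K = {f::'a \<Rightarrow> real. (\<forall>x. x \<notin> V \<longrightarrow> f x = 0) \<and> sq_norm V f = 1}"
  obtain v where v: "v \<in> V" using ne by auto
  have "sq_norm V (indicator {v}) = 1"
    unfolding sq_norm_def using fin v by (simp add: indicator_def power2_eq_square)
  then have "indicator {v} \<in> K" unfolding K_def using v by (auto simp: indicator_def)
  moreover have "continuous_on K (\<lambda>f. adj_form V E f f)"
    unfolding adj_form_def adj_op_def
    by (intro continuous_intros continuous_on_subset[OF continuous_on_product_coordinates]) auto
  ultimately obtain f where fK: "f \<in> K" and fmin: "\<And>h. h \<in> K \<Longrightarrow> adj_form V E f f \<le> adj_form V E h h"
    using continuous_attains_inf[OF compact_unit_sphere_supported_on[OF fin, folded K_def]] by blast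
  have bound: "adj_form V E f f * sq_norm V h \<le> adj_form V E h h" for h
  proof (cases "sq_norm V h = 0")
    case True
    then show ?thesis
      using sq_norm_eq_0_iff[OF fin, of h] unfolding adj_form_def by simp
  next
    case False
    define n where "n = sq_norm V h"
    have n: "n > 0" using False sq_norm_nonneg[of V h] unfolding n_def by linarith
    define h' where "h' x = (if x \<in> V then h x / sqrt n else 0)" for x
    have h'_eq: "h' = (\<lambda>x. (1 / sqrt n) * (if x \<in> V then h x else 0))"
      unfolding h'_def by auto
    have "sq_norm V h' = 1"
      using n unfolding h'_eq sq_norm_scale sq_norm_restrict n_def by (simp add: power_divide)
    then have "h' \<in> K" unfolding K_def h'_def by auto
    then have "adj_form V E f f \<le> adj_form V E h' h'" by (rule fmin)
    also have "\<dots> = adj_form V E h h / n"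
      using n unfolding h'_eq adj_form_scale adj_form_restrict by (simp add: power_divide)
    finally have "adj_form V E f f \<le> adj_form V E h h / n" .
    then show ?thesis using n unfolding n_def by (simp add: field_simps)
  qed
  from fK have "sq_norm V f = 1" unfolding K_def by blast
  from this bound show thesis by (rule that)
qed

lemma adj_form_ge_min_eigenvalue:
  assumes "simple_graph V E" and "\<And>\<theta>. adj_eigenvalue V E \<theta> \<Longrightarrow> L \<le> \<theta>"
  shows "L * sq_norm V h \<le> adj_form V E h h"
proof -
  have fin: "finite V" using assms(1) unfolding simple_graph_def by blast
  have sym: "symp E" using assms(1) by (rule simple_graph_symp)
  obtain f where f1: "sq_norm V f = 1" and fmin: "\<And>h. adj_form V E f f * sq_norm V h \<le> adj_form V E h h"
    using adj_form_attains_min_on_sphere[OF assms(1)] by blast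
  have "\<exists>x\<in>V. f x \<noteq> 0"
    using f1 sq_norm_eq_0_iff[OF fin, of f] by auto
  then have "adj_eigenvalue V E (adj_form V E f f)"
    using adj_form_min_eigenvector[OF fin sym fmin, where f=f] f1 by simp
  then have "L \<le> adj_form V E f f" by (rule assms(2))
  then have "L * sq_norm V h \<le> adj_form V E f f * sq_norm V h"
    by (intro mult_right_mono sq_norm_nonneg)
  then show ?thesis using fmin[of h] by linarith
qed

lemma simple_graph_finite_neighbours:
  assumes "simple_graph V E"
  shows "finite {y. E x y}"
  by (rule finite_subset[of _ V]) (use assms in \<open>auto simp: simple_graph_def\<close>)

lemma gdist_self: "gdist E x x = 0"
  unfolding gdist_def by (simp add: Least_eq_0)

lemma gdist_adjacent:
  assumes "simple_graph V E" "E x z"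
  shows "gdist E x z = 1"
  unfolding gdist_def
proof (rule Least_equality)
  show "walk E 1 x z" using assms(2) by simp
next
  fix n assume "walk E n x z"
  moreover have "x \<noteq> z" using assms unfolding simple_graph_def by auto
  ultimately show "1 \<le> n" by (cases n) auto
qed

lemma walk_leaves_set:
  "walk E n u y \<Longrightarrow> u \<in> S \<Longrightarrow> y \<notin> S \<Longrightarrow> \<exists>p q. p \<in> S \<and> q \<notin> S \<and> E p q"
proof (induction n arbitrary: u)
  case (Suc n)
  then obtain z where "E u z" "walk E n z y" by auto
  with Suc show ?case by (cases "z \<in> S") blast+
qed simp

lemma diameter_attained:
  assumes "finite V" "V \<noteq> {}"
  obtains x y where "x \<in> V" "y \<in> V" "gdist E x y = diameter V E"
proof -
  define D where "D = {gdist E x y | x y. x \<in> V \<and> y \<in> V}"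
  have "D = (\<lambda>(x, y). gdist E x y) ` (V \<times> V)" unfolding D_def by auto
  then have "finite D" using assms(1) by simp
  moreover have "D \<noteq> {}" using assms(2) unfolding D_def by auto
  ultimately have "diameter V E \<in> D" unfolding diameter_def D_def[symmetric] by (rule Max_in)
  then obtain x y where "x \<in> V" "y \<in> V" "diameter V E = gdist E x y"
    unfolding D_def by blast
  then show thesis using that by simp
qed

lemma diameter_ge_2_induced_path:
  assumes "connected_graph V E" "diameter V E \<ge> 2"
  obtains x p q where "E x p" "E p q" "q \<noteq> x" "\<not> E x q"
proof -
  have sg: "simple_graph V E" using assms(1) unfolding connected_graph_def by blast
  then have "finite V" "V \<noteq> {}" unfolding simple_graph_def by auto
  then obtain x y where "x \<in> V" "y \<in> V" and "gdist E x y = diameter V E"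
    by (rule diameter_attained)
  with assms(2) have far: "gdist E x y \<ge> 2" by simp
  obtain n where "walk E n x y"
    using assms(1) \<open>x \<in> V\<close> \<open>y \<in> V\<close> unfolding connected_graph_def by blast
  moreover have "y \<notin> insert x {z. E x z}"
    using far gdist_self[of E x] gdist_adjacent[OF sg, of x y] by auto
  ultimately obtain p q where "p \<in> insert x {z. E x z}" "q \<notin> insert x {z. E x z}" "E p q"
    using walk_leaves_set[of E n x y "insert x {z. E x z}"] by blast
  then have "E x p" "E p q" "q \<noteq> x" "\<not> E x q" by auto
  then show thesis by (rule that)
qed

lemma distance_regular_valency:
  assumes "distance_regular V E b c" "y \<in> V"
  shows "card {z. E y z} = b 0"
proof -
  have sg: "simple_graph V E"
    using assms(1) unfolding distance_regular_def connected_graph_def by blast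
  have "{z. E y z \<and> gdist E y z = gdist E y y + 1} = {z. E y z}"
    using gdist_adjacent[OF sg] gdist_self[of E y] by auto
  moreover have "card {z. E y z \<and> gdist E y z = gdist E y y + 1} = b (gdist E y y)"
    using assms unfolding distance_regular_def by blast
  ultimately show ?thesis by (simp add: gdist_self)
qed

lemma distance_regular_common_neighbours:
  assumes dr: "distance_regular V E b c" and "E x y"
  shows "card {z. E x z \<and> E y z} + c 1 + b 1 \<le> b 0"
proof -
  have sg: "simple_graph V E"
    using dr unfolding distance_regular_def connected_graph_def by blast
  have V: "x \<in> V" "y \<in> V" using sg \<open>E x y\<close> unfolding simple_graph_def by auto
  have xy: "gdist E x y = 1" by (rule gdist_adjacent[OF sg \<open>E x y\<close>])
  define closer where "closer = {z. E y z \<and> gdist E x z + 1 = gdist E x y}"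
  define common where "common = {z. E x z \<and> E y z}"
  define farther where "farther = {z. E y z \<and> gdist E x z = gdist E x y + 1}"
  have "card closer = c (gdist E x y) \<and> card farther = b (gdist E x y)"
    using dr[unfolded distance_regular_def] V unfolding closer_def farther_def by (meson bspec)
  then have card_closer: "card closer = c 1" and card_farther: "card farther = b 1"
    using xy by simp_all
  have sub: "closer \<union> common \<union> farther \<subseteq> {z. E y z}"
    unfolding closer_def common_def farther_def by auto
  have fin: "finite {z. E y z}" by (rule simple_graph_finite_neighbours[OF sg])
  have "closer \<inter> common = {}" "(closer \<union> common) \<inter> farther = {}"
    unfolding closer_def common_def farther_def using gdist_adjacent[OF sg] xy by auto
  moreover have "finite closer" "finite common" "finite farther"
    using finite_subset[OF sub fin] by auto
  ultimately have "card (closer \<union> common \<union> farther) = card closer + card common + card farther"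
    by (simp add: card_Un_disjoint)
  moreover have "card (closer \<union> common \<union> farther) \<le> card {z. E y z}"
    by (rule card_mono[OF fin sub])
  ultimately have "card common + c 1 + b 1 \<le> card {z. E y z}"
    using card_closer card_farther by linarith
  then show ?thesis
    using distance_regular_valency[OF dr V(2)] unfolding common_def by simp
qed

lemma sum_indicator_eq_card_real:
  assumes "finite A"
  shows "(\<Sum>x\<in>A. indicator B x :: real) = card (A \<inter> B)"
  unfolding indicator_def using assms by (simp add: sum.If_cases Int_def)

lemma adj_op_indicator:
  assumes "finite V"
  shows "adj_op V E (indicator T) v = card ({y\<in>V. E v y} \<inter> T)"
  unfolding adj_op_def using assms by (simp add: sum_indicator_eq_card_real)

lemma
  fixes s r :: real
  assumes sg: "simple_graph V E" and V: "x \<in> V" "q \<in> V" and "q \<noteq> x" "\<not> E x q"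
  defines "f \<equiv> \<lambda>v. s * indicator {x} v + indicator {y. E x y} v + r * indicator {q} v"
  shows adj_form_neighbourhood_vector:
      "adj_form V E f f = 2 * s * card {y. E x y} + (\<Sum>y | E x y. real (card {z. E x z \<and> E y z}))
         + 2 * r * card {y. E x y \<and> E q y}"
    and sq_norm_neighbourhood_vector: "sq_norm V f = s\<^sup>2 + card {y. E x y} + r\<^sup>2"
proof -
  define N where "N = {y. E x y}"
  have fin: "finite V" and NV: "N \<subseteq> V" and irrefl: "\<And>v. \<not> E v v"
    and edges: "\<And>u v. E u v \<Longrightarrow> u \<in> V \<and> v \<in> V"
    using sg unfolding simple_graph_def N_def by auto
  have sym: "E u v \<longleftrightarrow> E v u" for u v
    using simple_graph_symp[OF sg] by (auto dest: sympD)
  have xN: "x \<notin> N" and qN: "q \<notin> N"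
    using irrefl \<open>\<not> E x q\<close> unfolding N_def by auto
  have weighted_sum: "(\<Sum>v\<in>V. f v * g v) = s * g x + (\<Sum>y\<in>N. g y) + r * g q" for g
    using fin V unfolding f_def N_def[symmetric]
    by (simp add: algebra_simps sum.distrib sum_distrib_left[symmetric] Int_absorb1[OF NV])
  define A where "A = adj_op V E f"
  have A: "A v = s * card ({y\<in>V. E v y} \<inter> {x}) + card ({y\<in>V. E v y} \<inter> N)
      + r * card ({y\<in>V. E v y} \<inter> {q})" for v
    unfolding A_def f_def N_def[symmetric] adj_op_indicator[OF fin, symmetric]
    by (simp add: adj_op_def sum.distrib sum_distrib_left[symmetric])
  have "{y\<in>V. E x y} \<inter> {x} = {}" "{y\<in>V. E x y} \<inter> N = N" "{y\<in>V. E x y} \<inter> {q} = {}"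
    using irrefl NV \<open>\<not> E x q\<close> unfolding N_def by auto
  then have Ax: "A x = card N" by (simp add: A)
  have "{y\<in>V. E q y} \<inter> {x} = {}" "{y\<in>V. E q y} \<inter> N = {y\<in>N. E q y}" "{y\<in>V. E q y} \<inter> {q} = {}"
    using irrefl NV \<open>\<not> E x q\<close> sym by auto
  then have Aq: "A q = card {y\<in>N. E q y}" by (simp add: A)
  have AN: "A y = s + card {z. E x z \<and> E y z} + r * (if E q y then 1 else 0)" if "y \<in> N" for y
  proof -
    have "{z\<in>V. E y z} \<inter> {x} = {x}" "{z\<in>V. E y z} \<inter> N = {z. E x z \<and> E y z}"
      "{z\<in>V. E y z} \<inter> {q} = (if E q y then {q} else {})"
      using that V edges sym unfolding N_def by auto
    then show ?thesis by (simp add: A)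
  qed
  have "(\<Sum>y\<in>N. A y) = s * card N + (\<Sum>y\<in>N. real (card {z. E x z \<and> E y z}))
      + r * card {y\<in>N. E q y}"
    using AN finite_subset[OF NV fin]
    by (simp add: sum.distrib sum_distrib_left[symmetric] sum.If_cases Int_def)
  then show "adj_form V E f f = 2 * s * card {y. E x y}
      + (\<Sum>y | E x y. real (card {z. E x z \<and> E y z})) + 2 * r * card {y. E x y \<and> E q y}"
    unfolding adj_form_def A_def[symmetric] weighted_sum Ax Aq by (simp add: N_def)
  have "(f v)\<^sup>2 = s\<^sup>2 * indicator {x} v + indicator N v + r\<^sup>2 * indicator {q} v" for v
    using xN qN \<open>q \<noteq> x\<close> unfolding f_def N_def[symmetric] by (auto simp: indicator_def power2_eq_square)
  then show "sq_norm V f = s\<^sup>2 + card {y. E x y} + r\<^sup>2"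
    unfolding sq_norm_def N_def[symmetric] using fin V
    by (simp add: sum.distrib sum_distrib_left[symmetric] sum_indicator_eq_card_real Int_absorb1[OF NV])
qed

lemma valency_lt_of_adj_form_lower_bound:
  fixes M a :: real
  assumes sg: "simple_graph V E" and "M > 0"
    and lower: "\<And>h. - M * sq_norm V h \<le> adj_form V E h h"
    and path: "E x p" "E p q" "q \<noteq> x" "\<not> E x q"
    and common: "\<And>y. E x y \<Longrightarrow> card {z. E x z \<and> E y z} \<le> a"
  shows "card {y. E x y} < M * (a + M)"
proof -
  have V: "x \<in> V" "q \<in> V" using sg path unfolding simple_graph_def by auto
  have finN: "finite {y. E x y}" by (rule simple_graph_finite_neighbours[OF sg])
  have symE: "E q p" using simple_graph_symp[OF sg] path(2) by (rule sympD)
  define k where "k = real (card {y. E x y})"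
  define d where "d = real (card {y. E x y \<and> E q y})"
  have "card {y. E x y \<and> E q y} > 0"
    using finN path(1) symE by (auto simp: card_gt_0_iff intro: finite_subset)
  then have d: "d \<ge> 1" unfolding d_def by simp
  have "card {y. E x y} > 0" using finN path(1) by (auto simp: card_gt_0_iff)
  then have k: "k > 0" unfolding k_def by simp
  define S where "S = (\<Sum>y | E x y. real (card {z. E x z \<and> E y z}))"
  have S: "S \<le> k * a"
    unfolding S_def k_def using sum_bounded_above[of "{y. E x y}" _ a] common by force
  \<comment> \<open>the weights \<open>-k/M\<close> and \<open>-d/M\<close> minimise the resulting quadratic bound\<close>
  define f where "f v = (-k/M) * indicator {x} v + indicator {y. E x y} v + (-d/M) * indicator {q} v"
    for v
  have "- M * sq_norm V f \<le> adj_form V E f f" by (rule lower)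
  also have "adj_form V E f f = 2 * (-k/M) * k + S + 2 * (-d/M) * d"
    unfolding f_def adj_form_neighbourhood_vector[OF sg V path(3,4)] S_def k_def d_def ..
  also have "sq_norm V f = (-k/M)\<^sup>2 + k + (-d/M)\<^sup>2"
    unfolding f_def sq_norm_neighbourhood_vector[OF sg V path(3,4)] k_def ..
  finally have "0 \<le> 2 * (-k/M) * k + k * a + 2 * (-d/M) * d + M * ((-k/M)\<^sup>2 + k + (-d/M)\<^sup>2)"
    using S by linarith
  then have "0 \<le> M * (2 * (-k/M) * k + k * a + 2 * (-d/M) * d + M * ((-k/M)\<^sup>2 + k + (-d/M)\<^sup>2))"
    using \<open>M > 0\<close> by simp
  also have "\<dots> = k * (M * (a + M) - k) - d\<^sup>2"
    using \<open>M > 0\<close> by (simp add: field_simps power2_eq_square)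
  moreover have "d\<^sup>2 \<ge> 1" using d by (simp add: one_le_power)
  ultimately have "k * (M * (a + M) - k) > 0" by linarith
  with k show ?thesis unfolding k_def by (simp add: zero_less_mult_iff)
qed

theorem lemma3p2:
  fixes V :: "'a set" and E :: "'a \<Rightarrow> 'a \<Rightarrow> bool" and b c :: "nat \<Rightarrow> nat" and m :: int
  assumes "m \<ge> 2"
    and "distance_regular V E b c"
    and "\<forall>\<theta>. adj_eigenvalue V E \<theta> \<longrightarrow> \<theta> \<ge> - real_of_int m"
    and "b 0 \<ge> 2"
    and "diameter V E \<ge> 2"
  shows "int (b 0) < m * ((int (b 0) - int (b 1) - int (c 1)) + m)"
proof -
  have conn: "connected_graph V E" and sg: "simple_graph V E"
    using assms(2) unfolding distance_regular_def connected_graph_def by blast+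
  obtain x p q where path: "E x p" "E p q" "q \<noteq> x" "\<not> E x q"
    using diameter_ge_2_induced_path[OF conn assms(5)] .
  have "x \<in> V" using sg path(1) unfolding simple_graph_def by blast
  have "card {z. E x z \<and> E y z} \<le> real_of_int (int (b 0) - int (b 1) - int (c 1))" if "E x y" for y
    using distance_regular_common_neighbours[OF assms(2) that] by linarith
  moreover have "- real_of_int m * sq_norm V h \<le> adj_form V E h h" for h
    using adj_form_ge_min_eigenvalue[OF sg] assms(3) by blast
  ultimately have "card {y. E x y} < real_of_int m * (real_of_int (int (b 0) - int (b 1) - int (c 1)) + m)"
    using valency_lt_of_adj_form_lower_bound[OF sg _ _ path] assms(1) by simp
  then have "real_of_int (int (b 0)) < real_of_int (m * ((int (b 0) - int (b 1) - int (c 1)) + m))"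
    using distance_regular_valency[OF assms(2) \<open>x \<in> V\<close>] by simp
  then show ?thesis by (simp only: of_int_less_iff)
qed

end
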